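(* Let $\mathbf{A},\mathbf{B}\in\mathbb{C}$ be constants and let $\vartheta_2,\vartheta_3,\vartheta_4,\eta$ be (nonvanishing $\vartheta_2$) solutions of $$\frac{d\vartheta_2}{d\tau}=\frac{i}{\pi}\Big\{\eta+\frac{\pi^2}{12}(\vartheta_3^4+\vartheta_4^4)\Big\}\vartheta_2,\quad \frac{d\vartheta_3}{d\tau}=\frac{i}{\pi}\Big\{\eta+\frac{\pi^2}{12}(\vartheta_3^4+\vartheta_4^4-3\mathbf{B}^4\vartheta_4^4)\Big\}\vartheta_3,$$ $$\frac{d\vartheta_4}{d\tau}=\frac{i}{\pi}\Big\{\eta+\frac{\pi^2}{12}(\vartheta_3^4+\vartheta_4^4-3\mathbf{A}^4\vartheta_3^4)\Big\}\vartheta_4,\quad \frac{d\eta}{d\tau}=\frac{i}{\pi}2\eta^2-\frac{\pi^3}{72}i\big\{\vartheta_3^8+(9\mathbf{A}^4\mathbf{B}^4-6\mathbf{A}^4-6\mathbf{B}^4+2)\vartheta_3^4\vartheta_4^4+\vartheta_4^8\big\}.$$ Then the quantity $\mathfrak{A}^4$ defined by $\mathfrak{A}^4\vartheta_2^4=\mathbf{A}^4\vartheta_3^4-\mathbf{B}^4\vartheta_4^4$ satisfies $\frac{d}{d\tau}\mathfrak{A}^4\equiv0$, i.e. it is a rational first integral of this system. *)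

theory Defs
  imports "HOL-Analysis.Analysis"
begin

end

theory Submission
  imports Defs
begin

text \<open>Fourth powers multiply logarithmic derivatives
  by 4, and with \<open>E = \<eta> + \<pi>\<^sup>2/12 (\<vartheta>\<^sub>3\<^sup>4 + \<vartheta>\<^sub>4\<^sup>4)\<close> the correction terms
  \<open>-3B\<^sup>4\<vartheta>\<^sub>4\<^sup>4\<close> and \<open>-3A\<^sup>4\<vartheta>\<^sub>3\<^sup>4\<close> cancel in \<open>A\<^sup>4\<vartheta>\<^sub>3\<^sup>4 - B\<^sup>4\<vartheta>\<^sub>4\<^sup>4\<close>.
  So numerator and denominator \<open>\<vartheta>\<^sub>2\<^sup>4\<close> both have logarithmic derivative \<open>4(i/\<pi>)E\<close>,
  and their quotient is constant.\<close>

lemma DERIV_power_log_deriv: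
  fixes f :: "'a::real_normed_field \<Rightarrow> 'a"
  assumes "(f has_field_derivative w * f t) (at t)"
  shows "((\<lambda>s. f s ^ n) has_field_derivative of_nat n * w * f t ^ n) (at t)"
proof (cases n)
  case 0
  then show ?thesis by simp
next
  case (Suc m)
  from DERIV_power[OF assms, of n]
  show ?thesis by (simp add: Suc algebra_simps)
qed

lemma DERIV_quotient_same_log_deriv:
  fixes f g :: "'a::real_normed_field \<Rightarrow> 'a"
  assumes "(f has_field_derivative w * f t) (at t)"
    and "(g has_field_derivative w * g t) (at t)"
    and "g t \<noteq> 0"
  shows "((\<lambda>s. f s / g s) has_field_derivative 0) (at t)"
proof -
  have "w * f t * g t - w * g t * f t = 0" by (simp add: algebra_simps)
  with DERIV_quotient[OF assms] show ?thesis by simp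
qed

lemma DERIV_fourth_power_combination:
  fixes f g :: "'a::real_normed_field \<Rightarrow> 'a"
  assumes "(f has_field_derivative c * (E - 3 * k * b * g t ^ 4) * f t) (at t)"
    and "(g has_field_derivative c * (E - 3 * k * a * f t ^ 4) * g t) (at t)"
  shows "((\<lambda>s. a * f s ^ 4 - b * g s ^ 4) has_field_derivative
           4 * c * E * (a * f t ^ 4 - b * g t ^ 4)) (at t)"
proof -
  have "((\<lambda>s. a * f s ^ 4 - b * g s ^ 4) has_field_derivative
          a * (4 * (c * (E - 3 * k * b * g t ^ 4)) * f t ^ 4)
        - b * (4 * (c * (E - 3 * k * a * f t ^ 4)) * g t ^ 4)) (at t)"
    using DERIV_power_log_deriv[OF assms(1), of 4] DERIV_power_log_deriv[OF assms(2), of 4]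
    by (intro DERIV_diff DERIV_cmult) simp_all
  then show ?thesis by (simp add: algebra_simps)
qed

theorem theorem7p2:
  fixes A B :: complex
    and th2 th3 th4 eta :: "complex \<Rightarrow> complex"
    and S :: "complex set"
  assumes S_open: "open S"
    and th2_nz: "\<And>t. t \<in> S \<Longrightarrow> th2 t \<noteq> 0"
    and d2: "\<And>t. t \<in> S \<Longrightarrow> (th2 has_field_derivative
        (\<i> / of_real pi) * (eta t + (of_real pi)^2 / 12 * (th3 t ^ 4 + th4 t ^ 4)) * th2 t) (at t)"
    and d3: "\<And>t. t \<in> S \<Longrightarrow> (th3 has_field_derivative
        (\<i> / of_real pi) * (eta t + (of_real pi)^2 / 12 * (th3 t ^ 4 + th4 t ^ 4 - 3 * B ^ 4 * th4 t ^ 4)) * th3 t) (at t)"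
    and d4: "\<And>t. t \<in> S \<Longrightarrow> (th4 has_field_derivative
        (\<i> / of_real pi) * (eta t + (of_real pi)^2 / 12 * (th3 t ^ 4 + th4 t ^ 4 - 3 * A ^ 4 * th3 t ^ 4)) * th4 t) (at t)"
    and deta: "\<And>t. t \<in> S \<Longrightarrow> (eta has_field_derivative
        (\<i> / of_real pi) * 2 * (eta t)^2 - (of_real pi)^3 / 72 * \<i> *
          (th3 t ^ 8 + (9 * A ^ 4 * B ^ 4 - 6 * A ^ 4 - 6 * B ^ 4 + 2) * th3 t ^ 4 * th4 t ^ 4 + th4 t ^ 8)) (at t)"
  shows "\<forall>t\<in>S. ((\<lambda>s. (A ^ 4 * th3 s ^ 4 - B ^ 4 * th4 s ^ 4) / th2 s ^ 4) has_field_derivative 0) (at t)"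
proof
  fix t assume t: "t \<in> S"
  define c where "c = \<i> / of_real pi"
  define k where "k = (of_real pi)^2 / (12::complex)"
  define E where "E = eta t + k * (th3 t ^ 4 + th4 t ^ 4)"
  have "(th3 has_field_derivative c * (E - 3 * k * B^4 * th4 t ^ 4) * th3 t) (at t)"
    using d3[OF t] by (simp add: c_def k_def E_def algebra_simps)
  moreover have "(th4 has_field_derivative c * (E - 3 * k * A^4 * th3 t ^ 4) * th4 t) (at t)"
    using d4[OF t] by (simp add: c_def k_def E_def algebra_simps)
  ultimately have numerator: "((\<lambda>s. A ^ 4 * th3 s ^ 4 - B ^ 4 * th4 s ^ 4) has_field_derivative
      (4 * c * E) * (A ^ 4 * th3 t ^ 4 - B ^ 4 * th4 t ^ 4)) (at t)"
    by (rule DERIV_fourth_power_combination)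
  have "(th2 has_field_derivative c * E * th2 t) (at t)"
    using d2[OF t] by (simp add: c_def k_def E_def)
  from DERIV_power_log_deriv[OF this, of 4]
  have denominator: "((\<lambda>s. th2 s ^ 4) has_field_derivative (4 * c * E) * th2 t ^ 4) (at t)"
    by (simp add: mult.assoc)
  show "((\<lambda>s. (A ^ 4 * th3 s ^ 4 - B ^ 4 * th4 s ^ 4) / th2 s ^ 4) has_field_derivative 0) (at t)"
    using DERIV_quotient_same_log_deriv[OF numerator denominator] th2_nz[OF t] by simp
qed

end
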